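(* Let $s\in[1/4,3/4]$, $\rho\ge2^{40}$, and let $g:(0,\infty)\to(0,\infty)$ be defined by $g(r):=\int_0^rg'(x)\,dx$, where $g'(r)=s\,r^{s-1}-s\rho^{s-1}$ for $r\in(0,\rho]$ and $g'(r)=0$ for $r\ge\rho$. Let $\lambda:[0,T]\to[0,1]$ be any function and define, for $v\in\mathbb{Z}\times\mathbb{R}$, $$B(t,v):=\langle v\rangle^3\exp[\lambda(t)g(\langle v\rangle)].$$ Then for all $t$ and $v,w\in\mathbb{Z}\times\mathbb{R}$, $$B(t,v+w)\lesssim B(t,v)B(t,w)\min(\langle v\rangle,\langle w\rangle)^{-3}.$$ Moreover, if $|v|\le|w|$ and $|w-v|\le|v|/4$, then $$|B(t,w)-B(t,v)|\lesssim[1+\lambda(t)g(\langle v\rangle)]\langle v\rangle^{-1}B(t,v)\cdot B(t,v-w)\langle v-w\rangle^{-2}.$$ The implicit constants are independent of $t$, $\lambda$, $s$, and $\rho$.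
   Context: $\langle v\rangle=(1+|v|^2)^{1/2}$ with $|v|$ the Euclidean norm of $v=(k,\xi)\in\mathbb{Z}\times\mathbb{R}\subset\mathbb{R}^2$. *)

theory Defs
  imports "HOL-Analysis.Analysis"
begin

definition vnorm :: "int \<times> real \<Rightarrow> real" where
  "vnorm v = sqrt ((real_of_int (fst v))\<^sup>2 + (snd v)\<^sup>2)"

definition jbr :: "int \<times> real \<Rightarrow> real" where
  "jbr v = sqrt (1 + (vnorm v)\<^sup>2)"

definition gder :: "real \<Rightarrow> real \<Rightarrow> real \<Rightarrow> real" where
  "gder s \<rho> r = (if r \<le> \<rho> then s * r powr (s - 1) - s * \<rho> powr (s - 1) else 0)"

definition gfun :: "real \<Rightarrow> real \<Rightarrow> real \<Rightarrow> real" where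
  "gfun s \<rho> r = integral {0..r} (gder s \<rho>)"

text \<open>B(t,v) with lam standing for the value lambda(t).\<close>
definition Bw :: "real \<Rightarrow> real \<Rightarrow> real \<Rightarrow> int \<times> real \<Rightarrow> real" where
  "Bw s \<rho> lam v = (jbr v) ^ 3 * exp (lam * gfun s \<rho> (jbr v))"

end

theory Submission
  imports Defs
begin

text \<open>Since g' is nonnegative and decreasing on (0, \<infinity>), g is nondecreasing and concave
  with g(0) = 0, hence subadditive. So exp(\<lambda> g) is submultiplicative along <v + w> \<le> <v> + <w>,
  and the cubic factor costs 2^3 min(<v>,<w>)^-3. For the difference estimate put a = <v> \<le>
  b = <w> \<le> 5a/4 and d = <v - w> \<ge> b - a. Concavity bounds g(b) - g(a) both by (b - a) g(a)/a,
  which controls exp(\<lambda>(g(b) - g(a))) - 1, and by g(d), which lets the remaining exponential be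
  absorbed into B(t, v - w).\<close>

definition primitive :: "(real \<Rightarrow> real) \<Rightarrow> real \<Rightarrow> real" where
  "primitive h r = integral {0..r} h"

definition weight :: "(real \<Rightarrow> real) \<Rightarrow> real \<Rightarrow> real \<Rightarrow> real" where
  "weight h lam r = r ^ 3 * exp (lam * primitive h r)"

lemma weight_pos: "0 < r \<Longrightarrow> 0 < weight h lam r"
  by (simp add: weight_def)

locale antimono_integrand =
  fixes h :: "real \<Rightarrow> real"
  assumes integrable: "0 \<le> r \<Longrightarrow> h integrable_on {0..r}"
    and nonneg: "0 < x \<Longrightarrow> 0 \<le> h x"
    and antimono: "0 < x \<Longrightarrow> x \<le> y \<Longrightarrow> h y \<le> h x"
begin

lemma primitive_0 [simp]: "primitive h 0 = 0"
  by (simp add: primitive_def)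

lemma integrable_subinterval:
  assumes "0 \<le> a" "a \<le> b"
  shows "h integrable_on {a..b}"
  using integrable_subinterval_real[OF integrable[of b]] assms by auto

lemma primitive_diff:
  assumes "0 \<le> a" "a \<le> b"
  shows "primitive h b - primitive h a = integral {a..b} h"
  using Henstock_Kurzweil_Integration.integral_combine[OF assms integrable[of b]] assms
  by (simp add: primitive_def)

lemma primitive_increment_le:
  assumes "0 < a" "a \<le> b"
  shows "primitive h b - primitive h a \<le> (b - a) * h a"
proof -
  have "integral {a..b} h \<le> integral {a..b} (\<lambda>_. h a)"
    using integrable_subinterval[of a b] assms antimono[of a] by (intro integral_le) auto
  then show ?thesis
    using primitive_diff[of a b] assms by simp
qed

lemma mult_le_primitive:
  assumes "0 < a"
  shows "a * h a \<le> primitive h a"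
proof -
  \<comment> \<open>h is only controlled on (0, a], so replace its value at the endpoint 0\<close>
  define h' where "h' x = (if x = 0 then h a else h x)" for x
  have "primitive h a = integral {0..a} h'"
    unfolding primitive_def h'_def by (rule integral_spike[of "{0}"]) auto
  moreover have "h' integrable_on {0..a}"
    by (rule integrable_spike_finite[of "{0}" _ _ h]) (use integrable assms in \<open>auto simp: h'_def\<close>)
  then have "integral {0..a} (\<lambda>_. h a) \<le> integral {0..a} h'"
    using assms antimono[of _ a] by (intro integral_le) (auto simp: h'_def)
  ultimately show ?thesis
    using assms by simp
qed

lemma primitive_nonneg:
  assumes "0 \<le> a"
  shows "0 \<le> primitive h a"
  using assms mult_le_primitive[of a] nonneg[of a]
  by (cases "a = 0") (auto intro: order_trans[rotated])

lemma primitive_mono: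
  assumes "0 \<le> a" "a \<le> b"
  shows "primitive h a \<le> primitive h b"
proof (cases "a = 0")
  case False
  then have "0 \<le> integral {a..b} h"
    using integrable_subinterval[of a b] assms nonneg by (intro integral_nonneg) auto
  then show ?thesis
    using primitive_diff[of a b] assms by simp
qed (use assms primitive_nonneg[of b] in simp)

lemma primitive_increment_le_slope:
  assumes "0 < a" "a \<le> b"
  shows "primitive h b - primitive h a \<le> (b - a) * primitive h a / a"
proof -
  have "primitive h b - primitive h a \<le> (b - a) * h a"
    using assms by (rule primitive_increment_le)
  also have "\<dots> \<le> (b - a) * (primitive h a / a)"
    using assms mult_le_primitive[of a] by (intro mult_left_mono) (auto simp: field_simps)
  finally show ?thesis
    by simp
qed

lemma primitive_subadditive:
  assumes "0 \<le> a" "0 \<le> c"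
  shows "primitive h (a + c) \<le> primitive h a + primitive h c"
proof -
  have le: "primitive h (a + c) \<le> primitive h a + primitive h c" if "0 < c" "c \<le> a" for a c
  proof -
    have "primitive h (a + c) - primitive h a \<le> c * h a"
      using primitive_increment_le[of a "a + c"] that by simp
    also have "\<dots> \<le> c * h c"
      using antimono[of c a] that by (intro mult_left_mono) auto
    also have "\<dots> \<le> primitive h c"
      using mult_le_primitive[of c] that by simp
    finally show ?thesis
      by simp
  qed
  consider "a = 0" | "c = 0" | "0 < c" "c \<le> a" | "0 < a" "a \<le> c"
    using assms by linarith
  then show ?thesis
    by cases (use le[of a c] le[of c a] in \<open>auto simp: ac_simps\<close>)
qed

lemma primitive_increment_le_primitive:
  assumes "0 \<le> a" "a \<le> b" "b - a \<le> d"
  shows "primitive h b - primitive h a \<le> primitive h d"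
  using primitive_subadditive[of a "b - a"] primitive_mono[of "b - a" d] assms by simp

end

lemma add_cube_le_div_min_cube:
  fixes a b :: real
  assumes "0 < a" "0 < b"
  shows "(a + b) ^ 3 \<le> 8 * a ^ 3 * b ^ 3 / min a b ^ 3"
proof -
  have "(a + b) ^ 3 \<le> (2 * max a b) ^ 3"
    using assms by (intro power_mono) auto
  also have "\<dots> = 8 * (max a b * min a b) ^ 3 / min a b ^ 3"
    using assms by (simp add: power_mult_distrib)
  also have "max a b * min a b = a * b"
    by (simp add: max_def min_def)
  finally show ?thesis
    by (simp add: power_mult_distrib)
qed

lemma exp_minus_one_le: "exp x - 1 \<le> x * exp (x::real)"
proof -
  have "(1 - x) * exp x \<le> exp (- x) * exp x"
    using exp_ge_add_one_self[of "- x"] by (intro mult_right_mono) auto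
  then show ?thesis
    by (simp add: exp_minus field_simps)
qed

lemma cube_diff_le:
  fixes a b :: real
  assumes "0 \<le> a" "a \<le> b" "b \<le> 5 / 4 * a"
  shows "b ^ 3 - a ^ 3 \<le> 4 * a ^ 2 * (b - a)"
proof -
  have "b * b \<le> (5 / 4 * a) * (5 / 4 * a)"
    using assms by (intro mult_mono) auto
  moreover have "a * b \<le> a * (5 / 4 * a)"
    using assms by (intro mult_left_mono) auto
  ultimately have "b * b + a * b \<le> 45 / 16 * (a * a)"
    by (simp add: algebra_simps)
  then have "b ^ 2 + a * b + a ^ 2 \<le> 4 * a ^ 2"
    unfolding power2_eq_square using zero_le_square[of a] by linarith
  then have "(b - a) * (b ^ 2 + a * b + a ^ 2) \<le> (b - a) * (4 * a ^ 2)"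
    using assms by (intro mult_left_mono) auto
  then show ?thesis
    by (simp add: algebra_simps power2_eq_square power3_eq_cube)
qed

lemma cube_exp_increment_le:
  fixes a b d p x F :: real
  assumes a: "0 < a" and b: "a \<le> b" "b \<le> 5 / 4 * a" and d: "b - a \<le> d"
    and x: "0 \<le> x" "exp x \<le> F" "a * x \<le> p * d" and p: "0 \<le> p"
  shows "b ^ 3 * exp x - a ^ 3 \<le> 4 * (1 + p) * a ^ 2 * d * F"
proof -
  have "4 * a ^ 2 * (b - a) \<le> 4 * a ^ 2 * d"
    using d by (intro mult_left_mono) auto
  then have "b ^ 3 - a ^ 3 \<le> 4 * a ^ 2 * d"
    using cube_diff_le[of a b] a b by linarith
  then have cube_part: "(b ^ 3 - a ^ 3) * exp x \<le> 4 * a ^ 2 * d * F"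
    using power_mono[OF b(1), of 3] x a b d by (intro mult_mono) auto
  have "a ^ 3 * (exp x - 1) \<le> a ^ 2 * (a * x * exp x)"
    using exp_minus_one_le[of x] a by (simp add: power3_eq_cube power2_eq_square)
  also have "\<dots> \<le> a ^ 2 * (p * d * F)"
    using x p a b d by (intro mult_left_mono mult_mono[OF x(3) x(2)]) auto
  finally have exp_part: "a ^ 3 * (exp x - 1) \<le> a ^ 2 * (p * d * F)" .
  have "b ^ 3 * exp x - a ^ 3 = (b ^ 3 - a ^ 3) * exp x + a ^ 3 * (exp x - 1)"
    by (simp add: algebra_simps)
  also have "\<dots> \<le> 4 * a ^ 2 * d * F + a ^ 2 * (p * d * F)"
    using cube_part exp_part by linarith
  also have "\<dots> \<le> 4 * (1 + p) * a ^ 2 * d * F"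
    using p a b d order_trans[OF exp_ge_zero x(2)] by (simp add: algebra_simps)
  finally show ?thesis .
qed

context antimono_integrand
begin

lemma weight_le_mult:
  assumes "0 < a" "0 < b" "0 \<le> c" "c \<le> a + b" "0 \<le> lam"
  shows "weight h lam c \<le> 8 * weight h lam a * weight h lam b / min a b ^ 3"
proof -
  have "primitive h c \<le> primitive h a + primitive h b"
    using primitive_mono[of c "a + b"] primitive_subadditive[of a b] assms by simp
  then have "exp (lam * primitive h c) \<le> exp (lam * primitive h a) * exp (lam * primitive h b)"
    using assms by (simp add: mult_left_mono flip: exp_add distrib_left)
  moreover have "c ^ 3 \<le> 8 * a ^ 3 * b ^ 3 / min a b ^ 3"
    using add_cube_le_div_min_cube[of a b] power_mono[of c "a + b" 3] assms by linarith
  ultimately have "weight h lam c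
      \<le> (8 * a ^ 3 * b ^ 3 / min a b ^ 3) * (exp (lam * primitive h a) * exp (lam * primitive h b))"
    unfolding weight_def using assms by (intro mult_mono) auto
  then show ?thesis
    by (simp add: weight_def field_simps)
qed

lemma weight_diff_le:
  assumes a: "0 < a" and b: "a \<le> b" "b \<le> 5 / 4 * a" and d: "b - a \<le> d" "0 < d"
    and lam: "0 \<le> lam"
  shows "\<bar>weight h lam b - weight h lam a\<bar>
    \<le> 4 * (1 + lam * primitive h a) / a * weight h lam a * weight h lam d / d ^ 2"
proof -
  define x E F where "x = lam * (primitive h b - primitive h a)"
    and "E = exp (lam * primitive h a)" and "F = exp (lam * primitive h d)"
  have x_nonneg: "0 \<le> x"
    unfolding x_def using primitive_mono[of a b] a b lam by simp
  have "exp x \<le> F"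
    unfolding x_def F_def using primitive_increment_le_primitive[of a b d] a b d lam
    by (simp add: mult_left_mono)
  moreover have "a * x \<le> lam * primitive h a * d"
  proof -
    have "x \<le> lam * ((b - a) * primitive h a / a)"
      unfolding x_def using primitive_increment_le_slope[of a b] a b lam by (intro mult_left_mono)
    then have "a * x \<le> lam * ((b - a) * primitive h a)"
      using a by (simp add: field_simps)
    also have "\<dots> \<le> lam * (d * primitive h a)"
      using d a lam primitive_nonneg[of a] by (intro mult_left_mono mult_right_mono) auto
    finally show ?thesis
      by (simp add: ac_simps)
  qed
  ultimately have increment:
      "b ^ 3 * exp x - a ^ 3 \<le> 4 * (1 + lam * primitive h a) * a ^ 2 * d * F"
    by (rule cube_exp_increment_le[OF a b d(1) x_nonneg]) (use a lam primitive_nonneg[of a] in simp)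
  have "a ^ 3 * 1 \<le> b ^ 3 * exp x"
    using power_mono[OF b(1), of 3] x_nonneg a b by (intro mult_mono) auto
  moreover have "weight h lam b - weight h lam a = E * (b ^ 3 * exp x - a ^ 3)"
    unfolding weight_def E_def x_def by (simp add: algebra_simps flip: exp_add)
  ultimately have "\<bar>weight h lam b - weight h lam a\<bar> = E * (b ^ 3 * exp x - a ^ 3)"
    by (simp add: E_def abs_mult)
  also have "\<dots> \<le> E * (4 * (1 + lam * primitive h a) * a ^ 2 * d * F)"
    using increment by (simp add: E_def)
  also have "\<dots> = 4 * (1 + lam * primitive h a) / a * weight h lam a * weight h lam d / d ^ 2"
    unfolding weight_def E_def F_def using a d
    by (simp add: field_simps power2_eq_square power3_eq_cube)
  finally show ?thesis .
qed

end

lemma antimono_integrand_gder: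
  assumes "0 < s" "s \<le> 1"
  shows "antimono_integrand (gder s \<rho>)"
proof
  fix r :: real
  assume "0 \<le> r"
  have "(\<lambda>x. s * x powr (s - 1) - s * \<rho> powr (s - 1)) integrable_on {0..min \<rho> r}"
  proof (cases "0 \<le> min \<rho> r")
    case True
    then show ?thesis
      using integrable_on_powr_from_0[of "s - 1" "min \<rho> r"] assms
      by (intro integrable_diff integrable_on_mult_right) auto
  qed auto
  then have "(\<lambda>x. if x \<in> {0..\<rho>} then s * x powr (s - 1) - s * \<rho> powr (s - 1) else 0)
      integrable_on {0..r}"
    unfolding integrable_restrict_Int Int_atLeastAtMost by simp
  then show "gder s \<rho> integrable_on {0..r}"
    by (rule integrable_eq) (auto simp: gder_def)
next
  fix x y :: real
  assume "0 < x"
  then show "0 \<le> gder s \<rho> x"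
    using assms by (auto simp: gder_def intro: powr_mono2')
  assume "x \<le> y"
  then show "gder s \<rho> y \<le> gder s \<rho> x"
    using \<open>0 < x\<close> assms by (auto simp: gder_def intro: powr_mono2')
qed

definition real_pair :: "int \<times> real \<Rightarrow> real \<times> real" where
  "real_pair v = (real_of_int (fst v), snd v)"

lemma real_pair_diff [simp]: "real_pair (v - w) = real_pair v - real_pair w"
  by (simp add: real_pair_def)

lemma vnorm_eq_norm: "vnorm v = norm (real_pair v)"
  by (simp add: vnorm_def real_pair_def norm_prod_def)

lemma jbr_eq_norm: "jbr v = norm (1 :: real, real_pair v)"
  by (simp add: jbr_def vnorm_eq_norm norm_prod_def)

lemma one_le_jbr: "1 \<le> jbr v"
  by (simp add: jbr_def)

lemma vnorm_le_jbr: "vnorm v \<le> jbr v"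
  unfolding jbr_def by (rule real_le_rsqrt) simp

lemma vnorm_minus_commute: "vnorm (v - w) = vnorm (w - v)"
  by (simp add: vnorm_eq_norm norm_minus_commute)

lemma jbr_mono: "vnorm v \<le> vnorm w \<Longrightarrow> jbr v \<le> jbr w"
  unfolding jbr_def by (simp add: power_mono vnorm_eq_norm)

lemma jbr_diff_le: "jbr w - jbr v \<le> vnorm (w - v)"
  using norm_triangle_ineq2[of "(1 :: real, real_pair w)" "(1, real_pair v)"]
  by (simp add: jbr_eq_norm vnorm_eq_norm norm_prod_def)

lemma jbr_add_le: "jbr (v + w) \<le> jbr v + jbr w"
  using jbr_diff_le[of "v + w" v] vnorm_le_jbr[of w] by simp

lemma gfun_eq_primitive: "gfun s \<rho> = primitive (gder s \<rho>)"
  by (simp add: fun_eq_iff gfun_def primitive_def)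

lemma Bw_eq_weight: "Bw s \<rho> lam v = weight (gder s \<rho>) lam (jbr v)"
  by (simp add: Bw_def weight_def gfun_eq_primitive)

lemma Bw_add_le:
  assumes "0 < s" "s \<le> 1" "0 \<le> lam"
  shows "Bw s \<rho> lam (v + w) \<le> 8 * Bw s \<rho> lam v * Bw s \<rho> lam w / min (jbr v) (jbr w) ^ 3"
proof -
  interpret antimono_integrand "gder s \<rho>"
    using assms(1,2) by (rule antimono_integrand_gder)
  show ?thesis
    unfolding Bw_eq_weight
    using one_le_jbr[of v] one_le_jbr[of w] one_le_jbr[of "v + w"] jbr_add_le[of v w] assms
    by (intro weight_le_mult) auto
qed

lemma Bw_diff_le:
  assumes "0 < s" "s \<le> 1" "0 \<le> lam"
    and vw: "vnorm v \<le> vnorm w" "vnorm (w - v) \<le> vnorm v / 4"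
  shows "\<bar>Bw s \<rho> lam w - Bw s \<rho> lam v\<bar>
    \<le> 4 * (1 + lam * gfun s \<rho> (jbr v)) / jbr v * Bw s \<rho> lam v * Bw s \<rho> lam (v - w)
        / jbr (v - w) ^ 2"
proof -
  interpret antimono_integrand "gder s \<rho>"
    using assms(1,2) by (rule antimono_integrand_gder)
  have "jbr w - jbr v \<le> vnorm (v - w)"
    using jbr_diff_le[of w v] by (simp add: vnorm_minus_commute)
  then show ?thesis
    unfolding Bw_eq_weight gfun_eq_primitive
    using jbr_mono[OF vw(1)] vnorm_le_jbr[of v] vnorm_le_jbr[of "v - w"] one_le_jbr[of v]
      one_le_jbr[of "v - w"] vw(2) assms(3)
    by (intro weight_diff_le) (auto simp: vnorm_minus_commute)
qed

theorem lemmaA3: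
  "\<exists>C > 0. \<forall>(s::real) (\<rho>::real) (T::real) (lam::real \<Rightarrow> real) (t::real) (v::int \<times> real) (w::int \<times> real).
      (s \<in> {1/4..3/4} \<and> \<rho> \<ge> 2 ^ 40 \<and> (\<forall>\<tau>\<in>{0..T}. lam \<tau> \<in> {0..1}) \<and> t \<in> {0..T}) \<longrightarrow>
        (Bw s \<rho> (lam t) (v + w)
          \<le> C * Bw s \<rho> (lam t) v * Bw s \<rho> (lam t) w / (min (jbr v) (jbr w)) ^ 3
      \<and> ((vnorm v \<le> vnorm w \<and> vnorm (w - v) \<le> vnorm v / 4) \<longrightarrow>
          \<bar>Bw s \<rho> (lam t) w - Bw s \<rho> (lam t) v\<bar>
            \<le> C * (1 + lam t * gfun s \<rho> (jbr v)) / jbr v * Bw s \<rho> (lam t) v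
                * Bw s \<rho> (lam t) (v - w) / (jbr (v - w)) ^ 2))"
proof (intro exI[of _ 8] conjI allI impI)
  fix s \<rho> T t :: real and lam :: "real \<Rightarrow> real" and v w :: "int \<times> real"
  let ?B = "Bw s \<rho> (lam t)"
  assume "s \<in> {1/4..3/4} \<and> \<rho> \<ge> 2 ^ 40 \<and> (\<forall>\<tau>\<in>{0..T}. lam \<tau> \<in> {0..1}) \<and> t \<in> {0..T}"
  then have s: "0 < s" "s \<le> 1" and lam: "0 \<le> lam t"
    by auto
  then show "?B (v + w) \<le> 8 * ?B v * ?B w / min (jbr v) (jbr w) ^ 3"
    by (rule Bw_add_le)
  interpret antimono_integrand "gder s \<rho>"
    using s by (rule antimono_integrand_gder)
  assume "vnorm v \<le> vnorm w \<and> vnorm (w - v) \<le> vnorm v / 4"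
  then have "\<bar>?B w - ?B v\<bar>
      \<le> 4 * (1 + lam t * gfun s \<rho> (jbr v)) / jbr v * ?B v * ?B (v - w) / jbr (v - w) ^ 2"
    using s lam by (intro Bw_diff_le) auto
  also have "\<dots> \<le> 8 * (1 + lam t * gfun s \<rho> (jbr v)) / jbr v * ?B v * ?B (v - w) / jbr (v - w) ^ 2"
    unfolding Bw_eq_weight gfun_eq_primitive
    using lam primitive_nonneg one_le_jbr[of v] one_le_jbr[of "v - w"]
      weight_pos[of "jbr v"] weight_pos[of "jbr (v - w)"]
    by (intro divide_right_mono mult_right_mono) (auto intro: less_imp_le)
  finally show "\<bar>?B w - ?B v\<bar>
      \<le> 8 * (1 + lam t * gfun s \<rho> (jbr v)) / jbr v * ?B v * ?B (v - w) / jbr (v - w) ^ 2" .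
qed simp

end
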